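(* Let $a>0$, $b>0$, let $p\in\mathbb{N}$, and let $t>1$. Then \[ a\gamma + b\ln p + a\psi(t) - b\psi_p(t) > 0 . \]
   Context: $\gamma$ denotes the Euler–Mascheroni constant and $\psi(t)=\Gamma'(t)/\Gamma(t)$ is the digamma function for $t>0$, where $\Gamma$ is Euler's Gamma function. For $p\in\mathbb{N}$ and $t>0$, the $p$-Gamma function is $\Gamma_p(t)=\frac{p!\,p^t}{t(t+1)\cdots(t+p)}$, and $\psi_p(t)=\frac{d}{dt}\ln\Gamma_p(t)=\Gamma_p'(t)/\Gamma_p(t)$. *)

theory Defs
  imports "HOL-Analysis.Analysis"
begin

definition p_Gamma :: "nat \<Rightarrow> real \<Rightarrow> real" where
  "p_Gamma p t = fact p * real p powr t / (\<Prod>k=0..p. (t + real k))"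

definition p_psi :: "nat \<Rightarrow> real \<Rightarrow> real" where
  "p_psi p t = deriv (\<lambda>s. ln (p_Gamma p s)) t"

end

theory Submission
  imports Defs
begin

text \<open>Since \<open>ln \<Gamma>\<^sub>p(t) = ln p! + t ln p - \<Sum>\<^sub>k\<^sub>=\<^sub>0\<^sup>p ln (t + k)\<close>, we get
  \<open>\<psi>\<^sub>p(t) = ln p - \<Sum>\<^sub>k\<^sub>=\<^sub>0\<^sup>p 1/(t + k)\<close>, so the expression equals
  \<open>a (\<gamma> + \<psi>(t)) + b \<Sum>\<^sub>k\<^sub>=\<^sub>0\<^sup>p 1/(t + k)\<close>. Both summands are positive because
  \<open>\<psi>\<close> is strictly increasing on \<open>(0, \<infinity>)\<close> with \<open>\<psi>(1) = -\<gamma>\<close>.\<close>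

lemma ln_p_Gamma:
  assumes "s > 0" "p \<ge> 1"
  shows "ln (p_Gamma p s) = ln (fact p) + s * ln (real p) - (\<Sum>k=0..p. ln (s + real k))"
proof -
  have prod_pos: "(\<Prod>k=0..p. (s + real k)) > 0"
    using assms by (intro prod_pos) auto
  have "ln (p_Gamma p s) = ln (fact p * real p powr s) - ln (\<Prod>k=0..p. (s + real k))"
    unfolding p_Gamma_def using prod_pos assms by (subst ln_div) auto
  also have "ln (fact p * real p powr s) = ln (fact p) + s * ln (real p)"
    using assms by (subst ln_mult) auto
  also have "ln (\<Prod>k=0..p. (s + real k)) = (\<Sum>k=0..p. ln (s + real k))"
    using assms by (subst ln_prod) auto
  finally show ?thesis .
qed

lemma p_psi_eq:
  assumes "t > 0" "p \<ge> 1"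
  shows "p_psi p t = ln (real p) - (\<Sum>k=0..p. 1 / (t + real k))"
proof -
  let ?g = "\<lambda>s. ln (fact p) + s * ln (real p) - (\<Sum>k=0..p. ln (s + real k))"
  have "(?g has_real_derivative ln (real p) - (\<Sum>k=0..p. 1 / (t + real k))) (at t)"
    using assms by (auto intro!: derivative_eq_intros simp: add_pos_nonneg field_simps)
  then have "((\<lambda>s. ln (p_Gamma p s)) has_real_derivative
               ln (real p) - (\<Sum>k=0..p. 1 / (t + real k))) (at t)"
    by (rule has_field_derivative_transform_within_open[of _ _ _ "{0<..}"])
       (use assms ln_p_Gamma in auto)
  then show ?thesis
    unfolding p_psi_def by (rule DERIV_imp_deriv)
qed

lemma Digamma_gt_neg_euler_mascheroni:
  assumes "t > (1::real)"
  shows "euler_mascheroni + Digamma t > 0"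
proof -
  have "Digamma (1::real) < Digamma t"
    using assms by (intro Digamma_real_strict_mono) auto
  then show ?thesis by simp
qed

theorem lemma3p1:
  fixes a b t :: real and p :: nat
  assumes "a > 0" and "b > 0" and "p \<ge> 1" and "t > 1"
  shows "a * euler_mascheroni + b * ln (real p) + a * Digamma t - b * p_psi p t > 0"
proof -
  let ?S = "\<Sum>k=0..p. 1 / (t + real k)"
  have "a * (euler_mascheroni + Digamma t) > 0"
    using assms Digamma_gt_neg_euler_mascheroni by simp
  moreover have "b * ?S > 0"
    using assms by (intro mult_pos_pos sum_pos) auto
  moreover have "a * euler_mascheroni + b * ln (real p) + a * Digamma t - b * p_psi p t
                 = a * (euler_mascheroni + Digamma t) + b * ?S"
    using assms by (simp add: p_psi_eq algebra_simps)
  ultimately show ?thesis by linarith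
qed

end
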